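(* Let $N\ge2$, $d\in\mathbb{N}^*$, $\alpha>0$, $A\in\mathbb{R}_+^{N\times N}$ with $A_{ij}>0$ only if $j<i$ and, for all $i>1$, some $j<i$ with $A_{ij}>0$. Let $\psi(r)=(1+r^2)^{-\beta/2}$ with $\beta\ge0$. Consider solutions on $\mathbb{R}_+$ of $\frac{dx_i}{dt}=v_i$, $\frac{dv_i}{dt}=\alpha\sum_{j\ne i}Q_t(i,j)(v_j-v_i)$ with either (CS) $Q_t(i,j)=A_{ij}\psi(\|x_j(t)-x_i(t)\|_2)$, or (MT) $Q_t(i,j)=\dfrac{A_{ij}\psi(\|x_i(t)-x_j(t)\|_2)}{a_i+\sum_{k\ne i}A_{ik}\psi(\|x_i(t)-x_k(t)\|_2)}$, with $a\in\mathbb{R}_+^N$ such that $a_i>0$ whenever $A_{ij}=0$ for all $j\ne i$. For (CS), flocking occurs if: (i) $\beta<1$ (for every initial condition); or (ii) $\beta=1$ and $V(0)<C_{HL}$; or (iii) $\beta>1$ and $V(0)<C_{HL}\dfrac{r^*-X(0)}{(1+{r^*}^2)^{\beta/2}}$ with $r^*=\dfrac{\sqrt{(\beta X(0))^2+4(\beta-1)}+\beta X(0)}{2(\beta-1)}$. For (MT), flocking occurs if: (i) $\bar a=0$ or $\beta<1$ (for every initial condition); or (ii) $\bar a>0$, $\beta=1$ and $V(0)<M_{HL}\dfrac{\bar a+A_*}{\bar a}$; or (iii) $\bar a>0$, $\beta>1$ and $V(0)<M_{HL}\dfrac{(\bar a+A_* )(r^*-X(0))}{A_*+\bar a(1+{r^*}^2)^{\beta/2}}$,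 where $r^*$ is the solution on $[X(0),+\infty)$ of $(1-\beta)r^2+\beta X(0)r+1=-\frac{A_*}{\bar a}(1+r^2)^{1-\beta/2}$.
   Context: Graph: vertices $\{1,\dots,N\}$, edge $i\to j$ iff $i\ne j$ and $A_{ij}>0$; for $i>1$, $h_i$ is the maximal length (number of edges) of a path from $i$ to $1$, and $H=\sup_{i>1}h_i$. $A_*=\inf_{i>1}\sum_{j\ne i}A_{ij}$, $B_{ij}=A_{ij}/(a_i+\sum_{k\ne i}A_{ik})$, $B_*=\inf_{i>1}\sum_{j\ne i}B_{ij}$, $C_{HL}=\alpha A_*/H$, $M_{HL}=\alpha B_*/H$, $\bar a=\sup_{i>1}a_i$. $X(t)=\sup_{i,j}\|x_i(t)-x_j(t)\|_2$, $V(t)=\sup_{i,j}\|v_i(t)-v_j(t)\|_2$; flocking means $\sup_tX(t)<\infty$ and $V(t)\to0$. *)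

theory Defs
  imports "HOL-Analysis.Analysis"
begin

text \<open>Agents are indexed by 1..N; A and a are given as functions on indices.\<close>

definition psi :: "real \<Rightarrow> real \<Rightarrow> real" where
  "psi \<beta> r = (1 + r\<^sup>2) powr (-\<beta>/2)"

definition edge :: "nat \<Rightarrow> (nat \<Rightarrow> nat \<Rightarrow> real) \<Rightarrow> nat \<Rightarrow> nat \<Rightarrow> bool" where
  "edge N A i j \<longleftrightarrow> i \<in> {1..N} \<and> j \<in> {1..N} \<and> i \<noteq> j \<and> A i j > 0"

definition path_to_1 :: "nat \<Rightarrow> (nat \<Rightarrow> nat \<Rightarrow> real) \<Rightarrow> nat \<Rightarrow> nat \<Rightarrow> bool" where
  "path_to_1 N A i k \<longleftrightarrow> (\<exists>p::nat \<Rightarrow> nat. p 0 = i \<and> p k = 1 \<and>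
      (\<forall>m<k. edge N A (p m) (p (Suc m))))"

definition hh :: "nat \<Rightarrow> (nat \<Rightarrow> nat \<Rightarrow> real) \<Rightarrow> nat \<Rightarrow> nat" where
  "hh N A i = Max {k. path_to_1 N A i k}"

definition HH :: "nat \<Rightarrow> (nat \<Rightarrow> nat \<Rightarrow> real) \<Rightarrow> nat" where
  "HH N A = Max (hh N A ` {2..N})"

definition Astar :: "nat \<Rightarrow> (nat \<Rightarrow> nat \<Rightarrow> real) \<Rightarrow> real" where
  "Astar N A = Min ((\<lambda>i. \<Sum>j\<in>{1..N}-{i}. A i j) ` {2..N})"

definition Bmat :: "nat \<Rightarrow> (nat \<Rightarrow> nat \<Rightarrow> real) \<Rightarrow> (nat \<Rightarrow> real) \<Rightarrow> nat \<Rightarrow> nat \<Rightarrow> real" where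
  "Bmat N A a i j = A i j / (a i + (\<Sum>k\<in>{1..N}-{i}. A i k))"

definition Bstar :: "nat \<Rightarrow> (nat \<Rightarrow> nat \<Rightarrow> real) \<Rightarrow> (nat \<Rightarrow> real) \<Rightarrow> real" where
  "Bstar N A a = Min ((\<lambda>i. \<Sum>j\<in>{1..N}-{i}. Bmat N A a i j) ` {2..N})"

definition C_HL :: "nat \<Rightarrow> real \<Rightarrow> (nat \<Rightarrow> nat \<Rightarrow> real) \<Rightarrow> real" where
  "C_HL N \<alpha> A = \<alpha> * Astar N A / real (HH N A)"

definition M_HL :: "nat \<Rightarrow> real \<Rightarrow> (nat \<Rightarrow> nat \<Rightarrow> real) \<Rightarrow> (nat \<Rightarrow> real) \<Rightarrow> real" where
  "M_HL N \<alpha> A a = \<alpha> * Bstar N A a / real (HH N A)"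

definition abar :: "nat \<Rightarrow> (nat \<Rightarrow> real) \<Rightarrow> real" where
  "abar N a = Max (a ` {2..N})"

definition diam :: "nat \<Rightarrow> (nat \<Rightarrow> real \<Rightarrow> 'a::euclidean_space) \<Rightarrow> real \<Rightarrow> real" where
  "diam N x t = Max {norm (x i t - x j t) | i j. i \<in> {1..N} \<and> j \<in> {1..N}}"

definition CS_solution :: "nat \<Rightarrow> real \<Rightarrow> (nat \<Rightarrow> nat \<Rightarrow> real) \<Rightarrow> real \<Rightarrow>
    (nat \<Rightarrow> real \<Rightarrow> 'a::euclidean_space) \<Rightarrow> (nat \<Rightarrow> real \<Rightarrow> 'a) \<Rightarrow> bool" where
  "CS_solution N \<alpha> A \<beta> x v \<longleftrightarrow> (\<forall>i\<in>{1..N}. \<forall>t\<ge>0.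
     (x i has_vector_derivative v i t) (at t within {0..}) \<and>
     (v i has_vector_derivative
        (\<alpha> *\<^sub>R (\<Sum>j\<in>{1..N}-{i}. (A i j * psi \<beta> (norm (x j t - x i t))) *\<^sub>R (v j t - v i t))))
        (at t within {0..}))"

definition MT_solution :: "nat \<Rightarrow> real \<Rightarrow> (nat \<Rightarrow> nat \<Rightarrow> real) \<Rightarrow> (nat \<Rightarrow> real) \<Rightarrow> real \<Rightarrow>
    (nat \<Rightarrow> real \<Rightarrow> 'a::euclidean_space) \<Rightarrow> (nat \<Rightarrow> real \<Rightarrow> 'a) \<Rightarrow> bool" where
  "MT_solution N \<alpha> A a \<beta> x v \<longleftrightarrow> (\<forall>i\<in>{1..N}. \<forall>t\<ge>0.
     (x i has_vector_derivative v i t) (at t within {0..}) \<and>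
     (v i has_vector_derivative
        (\<alpha> *\<^sub>R (\<Sum>j\<in>{1..N}-{i}.
           (A i j * psi \<beta> (norm (x i t - x j t)) /
             (a i + (\<Sum>k\<in>{1..N}-{i}. A i k * psi \<beta> (norm (x i t - x k t)))))
           *\<^sub>R (v j t - v i t))))
        (at t within {0..}))"

definition flocking :: "nat \<Rightarrow> (nat \<Rightarrow> real \<Rightarrow> 'a::euclidean_space) \<Rightarrow> (nat \<Rightarrow> real \<Rightarrow> 'a) \<Rightarrow> bool" where
  "flocking N x v \<longleftrightarrow> (\<exists>B. \<forall>t\<ge>0. diam N x t \<le> B) \<and> ((\<lambda>t. diam N v t) \<longlongrightarrow> 0) at_top"

end

theory Submission
  imports Defs
begin

text \<open>Order the agents by their depth \<open>h\<close> in the leader graph (the length of the longest path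
  to agent 1): every interaction weight points to an agent of strictly smaller depth. Projected
  onto any direction, velocities relative to the leader then obey a triangular linear system which,
  as long as the diameter stays below a radius \<open>r\<close> and hence every follower receives total
  weight at least \<open>l(r)\<close>, is dominated by Erlang survival functions \<open>g\<^sub>H\<close>. So
  \<open>V(t) \<le> V(0) g\<^sub>H(t) \<rightarrow> 0\<close>, and since \<open>\<integral> g\<^sub>H \<le> H / l\<close> positions spread by at most
  \<open>V(0) H / l\<close>; if \<open>V(0) H < l(r) (r - X(0))\<close> a first-exit argument keeps the diameter below
  \<open>r\<close> forever. The cases of the theorem are choices of \<open>r\<close>: the gain \<open>l(r) (r - X(0))\<close> is
  unbounded for \<open>\<beta> < 1\<close> (and, in the Motsch-Tadmor model, whenever all \<open>a\<^sub>i\<close> vanish)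
  and has the stated limit for \<open>\<beta> = 1\<close>; for \<open>\<beta> > 1\<close> any radius works, the given
  \<open>r\<^sup>*\<close> being the optimal one.\<close>

section \<open>Comparison principles\<close>

lemma nonpos_barrier:
  fixes D D' :: "real \<Rightarrow> real"
  assumes T: "0 \<le> T" and cont: "continuous_on {0..T} D" and D0: "D 0 \<le> 0"
    and der: "\<And>s. 0 < s \<Longrightarrow> s < T \<Longrightarrow> (D has_real_derivative D' s) (at s)"
    and nonpos: "\<And>s. 0 < s \<Longrightarrow> s < T \<Longrightarrow> D s > 0 \<Longrightarrow> D' s \<le> 0"
  shows "D T \<le> 0"
proof (rule ccontr)
  assume DT: "\<not> D T \<le> 0"
  define S where "S = {0..T} \<inter> D -` {..0}"
  have "closed S" unfolding S_def by (rule continuous_closed_preimage[OF cont]) auto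
  moreover have "S \<noteq> {}" using T D0 unfolding S_def by auto
  moreover have bdd: "bdd_above S" unfolding S_def by (auto intro: bdd_aboveI[where M=T])
  ultimately have "Sup S \<in> S" by (rule closed_contains_Sup[rotated 2])
  then have s0: "0 \<le> Sup S" "Sup S < T" "D (Sup S) \<le> 0"
    using DT unfolding S_def by (auto simp: order_le_less)
  have pos: "D s > 0" if "Sup S < s" "s \<le> T" for s
    using cSup_upper[OF _ bdd, of s] that s0 unfolding S_def by force
  have "continuous_on {Sup S..T} D" using s0 by (intro continuous_on_subset[OF cont]) auto
  moreover have "D differentiable at s" if "Sup S < s" "s < T" for s
    using der[of s] that s0 real_differentiable_def by force
  ultimately obtain d z where z: "Sup S < z" "z < T" "(D has_real_derivative d) (at z)"
      "D T - D (Sup S) = (T - Sup S) * d"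
    using MVT[OF s0(2)] by blast
  have "d \<le> 0" using DERIV_unique[OF z(3) der[of z]] nonpos[of z] pos[of z] z s0 by simp
  then have "(T - Sup S) * d \<le> 0" using s0(2) by (intro mult_nonneg_nonpos) auto
  then have "D T \<le> D (Sup S)" using z(4) by linarith
  then show False using s0 DT by simp
qed

text \<open>The survival function of the Erlang distribution with shape \<open>k\<close> and rate \<open>l\<close>; it solves
  \<open>g\<^sub>k\<^sub>+\<^sub>1' = l (g\<^sub>k - g\<^sub>k\<^sub>+\<^sub>1)\<close>, the comparison system for an agent \<open>k\<close> levels below the leader.\<close>

definition erlang_surv :: "real \<Rightarrow> nat \<Rightarrow> real \<Rightarrow> real" where
  "erlang_surv l k t = (\<Sum>m<k. exp (-(l*t)) * (l*t)^m / fact m)"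

definition erlang_surv_integral :: "real \<Rightarrow> nat \<Rightarrow> real \<Rightarrow> real" where
  "erlang_surv_integral l k t = (\<Sum>j<k. (1 - erlang_surv l (Suc j) t) / l)"

lemma erlang_surv_0 [simp]: "erlang_surv l 0 t = 0"
  by (simp add: erlang_surv_def)

lemma erlang_surv_Suc: "erlang_surv l (Suc k) t = erlang_surv l k t + exp (-(l*t)) * (l*t)^k / fact k"
  by (simp add: erlang_surv_def)

lemma erlang_surv_nonneg: "0 \<le> l \<Longrightarrow> 0 \<le> t \<Longrightarrow> 0 \<le> erlang_surv l k t"
  unfolding erlang_surv_def by (intro sum_nonneg) auto

lemma erlang_surv_mono: "0 \<le> l \<Longrightarrow> 0 \<le> t \<Longrightarrow> k \<le> k' \<Longrightarrow> erlang_surv l k t \<le> erlang_surv l k' t"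
  unfolding erlang_surv_def by (intro sum_mono2) auto

lemma erlang_surv_at_0: "1 \<le> k \<Longrightarrow> erlang_surv l k 0 = 1"
  by (induction k rule: dec_induct) (simp_all add: erlang_surv_Suc)

lemma continuous_on_erlang_surv: "continuous_on S (erlang_surv l k)"
  unfolding erlang_surv_def by (intro continuous_intros) auto

lemma poisson_term_deriv:
  "((\<lambda>t. exp (-(l*t)) * (l*t)^Suc k / fact (Suc k)) has_real_derivative
      l * (exp (-(l*t)) * (l*t)^k / fact k - exp (-(l*t)) * (l*t)^Suc k / fact (Suc k))) (at t)"
proof -
  have fact_ratio: "real (Suc k) / fact (Suc k) = 1 / (fact k :: real)"
    by (simp add: fact_Suc del: of_nat_Suc)
  have deriv: "((\<lambda>t. exp (-(l*t)) * (l*t)^Suc k) has_real_derivative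
      exp (-(l*t)) * (-l) * (l*t)^Suc k + exp (-(l*t)) * (real (Suc k) * (l*t)^k * l)) (at t)"
    by (rule derivative_eq_intros refl)+ (simp add: algebra_simps)
  have "exp (-(l*t)) * (real (Suc k) * (l*t)^k * l) / fact (Suc k)
      = exp (-(l*t)) * (l*t)^k * l * (real (Suc k) / fact (Suc k))"
    by simp
  also have "\<dots> = l * (exp (-(l*t)) * (l*t)^k / fact k)" unfolding fact_ratio by simp
  finally have "(exp (-(l*t)) * (-l) * (l*t)^Suc k + exp (-(l*t)) * (real (Suc k) * (l*t)^k * l)) / fact (Suc k)
      = l * (exp (-(l*t)) * (l*t)^k / fact k - exp (-(l*t)) * (l*t)^Suc k / fact (Suc k))"
    unfolding add_divide_distrib by (simp add: algebra_simps)
  with DERIV_cdivide[OF deriv, of "fact (Suc k)"] show ?thesis by simp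
qed

lemma erlang_surv_deriv:
  "(erlang_surv l (Suc k) has_real_derivative l * (erlang_surv l k t - erlang_surv l (Suc k) t)) (at t)"
proof (induction k)
  case 0
  show ?case unfolding erlang_surv_def by (auto intro!: derivative_eq_intros)
next
  case (Suc k)
  have step: "erlang_surv l (Suc (Suc k)) =
      (\<lambda>t. erlang_surv l (Suc k) t + exp (-(l*t)) * (l*t)^Suc k / fact (Suc k))"
    by (simp add: erlang_surv_Suc fun_eq_iff)
  from DERIV_add[OF Suc poisson_term_deriv[of l k t]] show ?case
    unfolding step by (simp add: erlang_surv_Suc algebra_simps)
qed

lemma erlang_surv_integral_deriv:
  "l \<noteq> 0 \<Longrightarrow> (erlang_surv_integral l k has_real_derivative erlang_surv l k t) (at t)"
proof (induction k)
  case 0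
  then show ?case by (simp add: erlang_surv_integral_def)
next
  case (Suc k)
  have step: "erlang_surv_integral l (Suc k) =
      (\<lambda>t. erlang_surv_integral l k t + (1 - erlang_surv l (Suc k) t) / l)"
    by (simp add: erlang_surv_integral_def fun_eq_iff)
  have "((\<lambda>t. erlang_surv_integral l k t + (1 - erlang_surv l (Suc k) t) / l) has_real_derivative
      erlang_surv l k t + (0 - l * (erlang_surv l k t - erlang_surv l (Suc k) t)) / l) (at t)"
    using Suc by (intro DERIV_add DERIV_cdivide DERIV_diff DERIV_const erlang_surv_deriv)
  then show ?case unfolding step using Suc.prems by (simp add: field_simps)
qed

lemma erlang_surv_integral_at_0: "erlang_surv_integral l k 0 = 0"
  by (simp add: erlang_surv_integral_def erlang_surv_at_0)

lemma continuous_on_erlang_surv_integral: "continuous_on S (erlang_surv_integral l k)"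
  unfolding erlang_surv_integral_def divide_inverse
  by (intro continuous_intros continuous_on_erlang_surv)

lemma erlang_surv_integral_le: "0 < l \<Longrightarrow> 0 \<le> t \<Longrightarrow> erlang_surv_integral l k t \<le> k / l"
proof -
  assume l: "0 < l" and t: "0 \<le> t"
  have "erlang_surv_integral l k t \<le> (\<Sum>j<k. 1 / l)" unfolding erlang_surv_integral_def
    using erlang_surv_nonneg[OF _ t] l by (intro sum_mono divide_right_mono) auto
  then show ?thesis by simp
qed

lemma erlang_surv_tendsto_0: "0 < l \<Longrightarrow> (erlang_surv l k \<longlongrightarrow> 0) at_top"
proof -
  assume "0 < l"
  then have "filterlim (\<lambda>t. l * t) at_top at_top"
    by (intro filterlim_tendsto_pos_mult_at_top[OF tendsto_const]) (auto simp: filterlim_ident)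
  then have "((\<lambda>t. \<Sum>m<k. (l*t)^m / exp (l*t) / fact m) \<longlongrightarrow> (\<Sum>m<k. 0 / fact m)) at_top"
    by (intro tendsto_sum tendsto_divide tendsto_const filterlim_compose[OF tendsto_power_div_exp_0]) auto
  then show ?thesis unfolding erlang_surv_def by (simp add: exp_minus field_simps)
qed

lemma sum_weighted_gap_le:
  fixes q y :: "'i \<Rightarrow> real"
  assumes q_nonneg: "\<And>j. j \<in> J \<Longrightarrow> 0 \<le> q j" and below: "\<And>j. j \<in> J \<Longrightarrow> q j \<noteq> 0 \<Longrightarrow> y j \<le> b"
    and "b \<le> z" and "l \<le> sum q J"
  shows "(\<Sum>j\<in>J. q j * (y j - z)) \<le> l * (b - z)"
proof -
  have "(\<Sum>j\<in>J. q j * (y j - z)) \<le> (\<Sum>j\<in>J. q j * (b - z))"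
  proof (rule sum_mono)
    fix j assume "j \<in> J"
    then show "q j * (y j - z) \<le> q j * (b - z)"
      using q_nonneg below by (cases "q j = 0") (auto intro: mult_left_mono)
  qed
  also have "\<dots> = sum q J * (b - z)" by (simp add: sum_distrib_right)
  also have "\<dots> \<le> l * (b - z)" using assms(3,4) by (intro mult_right_mono_neg) auto
  finally show ?thesis .
qed

lemma hierarchical_comparison:
  fixes y :: "'i \<Rightarrow> real \<Rightarrow> real" and q :: "'i \<Rightarrow> 'i \<Rightarrow> real \<Rightarrow> real" and h :: "'i \<Rightarrow> nat"
  assumes T: "0 \<le> T" and l: "0 < l" and \<sigma>: "0 \<le> \<sigma>"
    and cont: "\<And>i. i \<in> I \<Longrightarrow> continuous_on {0..T} (y i)"
    and der: "\<And>i s. i \<in> I \<Longrightarrow> 0 < s \<Longrightarrow> s < T \<Longrightarrow>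
         (y i has_real_derivative (\<Sum>j\<in>I-{i}. q i j s * (y j s - y i s))) (at s)"
    and q_nonneg: "\<And>i j s. i \<in> I \<Longrightarrow> j \<in> I-{i} \<Longrightarrow> 0 < s \<Longrightarrow> s < T \<Longrightarrow> 0 \<le> q i j s"
    and q_level: "\<And>i j s. i \<in> I \<Longrightarrow> j \<in> I-{i} \<Longrightarrow> 0 < s \<Longrightarrow> s < T \<Longrightarrow> q i j s \<noteq> 0 \<Longrightarrow> h j < h i"
    and rate: "\<And>i s. i \<in> I \<Longrightarrow> 0 < h i \<Longrightarrow> 0 < s \<Longrightarrow> s < T \<Longrightarrow> l \<le> (\<Sum>j\<in>I-{i}. q i j s)"
    and leader: "\<And>i s. i \<in> I \<Longrightarrow> h i = 0 \<Longrightarrow> 0 \<le> s \<Longrightarrow> s \<le> T \<Longrightarrow> y i s \<le> 0"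
    and init: "\<And>i. i \<in> I \<Longrightarrow> y i 0 \<le> \<sigma>"
    and i: "i \<in> I" and t: "0 \<le> t" "t \<le> T"
  shows "y i t \<le> \<sigma> * erlang_surv l (h i) t"
  using i t
proof (induction "h i" arbitrary: i t rule: less_induct)
  case less
  show ?case
  proof (cases "h i")
    case 0
    then show ?thesis using leader less.prems by simp
  next
    case (Suc k)
    define D where "D s = y i s - \<sigma> * erlang_surv l (Suc k) s" for s
    define D' where "D' s = (\<Sum>j\<in>I-{i}. q i j s * (y j s - y i s))
        - \<sigma> * (l * (erlang_surv l k s - erlang_surv l (Suc k) s))" for s
    have "D t \<le> 0"
    proof (rule nonpos_barrier[of t D D'])
      show "continuous_on {0..t} D" unfolding D_def using less.prems
        by (intro continuous_intros continuous_on_erlang_surv continuous_on_subset[OF cont]) auto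
      show "D 0 \<le> 0" unfolding D_def using init[OF less.prems(1)] by (simp add: erlang_surv_at_0)
      show "(D has_real_derivative D' s) (at s)" if "0 < s" "s < t" for s
        unfolding D_def D'_def using less.prems that
        by (intro DERIV_diff der DERIV_cmult erlang_surv_deriv) auto
      show "D' s \<le> 0" if s: "0 < s" "s < t" and pos: "D s > 0" for s
      proof -
        have "(\<Sum>j\<in>I-{i}. q i j s * (y j s - y i s)) \<le> l * (\<sigma> * erlang_surv l k s - y i s)"
        proof (rule sum_weighted_gap_le)
          fix j assume j: "j \<in> I-{i}"
          then show "0 \<le> q i j s" using q_nonneg less.prems s by auto
          assume "q i j s \<noteq> 0"
          then have "h j < h i" using q_level j less.prems s by auto
          then have "y j s \<le> \<sigma> * erlang_surv l (h j) s" using less.hyps j less.prems s by auto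
          also have "\<dots> \<le> \<sigma> * erlang_surv l k s"
            using \<open>h j < h i\<close> Suc l s \<sigma> by (intro mult_left_mono erlang_surv_mono) auto
          finally show "y j s \<le> \<sigma> * erlang_surv l k s" .
        next
          have "\<sigma> * erlang_surv l k s \<le> \<sigma> * erlang_surv l (Suc k) s"
            using l s \<sigma> by (intro mult_left_mono erlang_surv_mono) auto
          then show "\<sigma> * erlang_surv l k s \<le> y i s" using pos unfolding D_def by simp
          show "l \<le> (\<Sum>j\<in>I-{i}. q i j s)" using rate Suc less.prems s by auto
        qed
        moreover have "l * (\<sigma> * erlang_surv l (Suc k) s) \<le> l * y i s"
          using pos l unfolding D_def by (intro mult_left_mono) auto
        ultimately show ?thesis unfolding D'_def by (simp add: algebra_simps)
      qed
    qed (use less.prems in auto)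
    then show ?thesis unfolding D_def Suc by simp
  qed
qed

section \<open>Flocking of hierarchical consensus systems\<close>

lemma diam_eq_Max: "diam N x t = Max ((\<lambda>(i,j). norm (x i t - x j t)) ` ({1..N} \<times> {1..N}))"
  unfolding diam_def by (rule arg_cong[where f=Max]) (auto simp: image_iff; blast)

lemma norm_le_diam: "i \<in> {1..N} \<Longrightarrow> j \<in> {1..N} \<Longrightarrow> norm (x i t - x j t) \<le> diam N x t"
  unfolding diam_eq_Max by (rule Max_ge) auto

lemma diam_le:
  "1 \<le> N \<Longrightarrow> (\<And>i j. i \<in> {1..N} \<Longrightarrow> j \<in> {1..N} \<Longrightarrow> norm (x i t - x j t) \<le> c) \<Longrightarrow> diam N x t \<le> c"
  unfolding diam_eq_Max by (subst Max_le_iff) auto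

lemma diam_nonneg: "1 \<le> N \<Longrightarrow> 0 \<le> diam N x t"
  using norm_le_diam[of 1 N 1 x t] by simp

lemma diam_attained: "1 \<le> N \<Longrightarrow> \<exists>i\<in>{1..N}. \<exists>j\<in>{1..N}. diam N x t = norm (x i t - x j t)"
proof -
  assume "1 \<le> N"
  then have "diam N x t \<in> (\<lambda>(i,j). norm (x i t - x j t)) ` ({1..N} \<times> {1..N})"
    unfolding diam_eq_Max by (intro Max_in) auto
  then show ?thesis by auto
qed

lemma continuous_on_if_vector_derivative_nonneg:
  assumes "\<And>t. 0 \<le> t \<Longrightarrow> (f has_vector_derivative f' t) (at t within {0..})"
  shows "continuous_on {0..T} f"
proof -
  have "continuous_on {0..} f" unfolding continuous_on_eq_continuous_within
    using has_vector_derivative_continuous[OF assms] by auto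
  then show ?thesis by (rule continuous_on_subset) auto
qed

lemma has_vector_derivative_at_pos:
  assumes "(f has_vector_derivative f') (at t within {0..})" and "0 < (t::real)"
  shows "(f has_vector_derivative f') (at t)"
proof -
  have "(f has_vector_derivative f') (at t within {0<..})"
    using assms(1) by (rule has_vector_derivative_within_subset) auto
  then show ?thesis using has_vector_derivative_within_open[of t "{0<..}"] assms(2) by auto
qed

locale hierarchical_flock =
  fixes N :: nat and x v :: "nat \<Rightarrow> real \<Rightarrow> 'a::euclidean_space" and q :: "nat \<Rightarrow> nat \<Rightarrow> real \<Rightarrow> real"
    and h :: "nat \<Rightarrow> nat" and H :: nat and l r :: real
  assumes N: "1 \<le> N" and l: "0 < l"
    and dx: "\<And>i t. i \<in> {1..N} \<Longrightarrow> 0 \<le> t \<Longrightarrow> (x i has_vector_derivative v i t) (at t within {0..})"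
    and dv: "\<And>i t. i \<in> {1..N} \<Longrightarrow> 0 \<le> t \<Longrightarrow>
       (v i has_vector_derivative (\<Sum>j\<in>{1..N}-{i}. q i j t *\<^sub>R (v j t - v i t))) (at t within {0..})"
    and q_nonneg: "\<And>i j t. i \<in> {1..N} \<Longrightarrow> j \<in> {1..N}-{i} \<Longrightarrow> 0 \<le> t \<Longrightarrow> 0 \<le> q i j t"
    and q_level: "\<And>i j t. i \<in> {1..N} \<Longrightarrow> j \<in> {1..N}-{i} \<Longrightarrow> 0 \<le> t \<Longrightarrow> q i j t \<noteq> 0 \<Longrightarrow> h j < h i"
    and h_leader: "h 1 = 0" and h_pos: "\<And>i. i \<in> {2..N} \<Longrightarrow> 0 < h i"
    and h_le: "\<And>i. i \<in> {1..N} \<Longrightarrow> h i \<le> H"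
    and rate: "\<And>i t. i \<in> {2..N} \<Longrightarrow> 0 \<le> t \<Longrightarrow> diam N x t \<le> r \<Longrightarrow> l \<le> (\<Sum>j\<in>{1..N}-{i}. q i j t)"
    and small_data: "diam N v 0 * H < l * (r - diam N x 0)"
begin

abbreviation "V0 \<equiv> diam N v 0"
abbreviation "X0 \<equiv> diam N x 0"

lemma continuous_on_x: "i \<in> {1..N} \<Longrightarrow> continuous_on {0..T} (x i)"
  by (rule continuous_on_if_vector_derivative_nonneg, rule dx) auto

lemma continuous_on_v: "i \<in> {1..N} \<Longrightarrow> continuous_on {0..T} (v i)"
  by (rule continuous_on_if_vector_derivative_nonneg, rule dv) auto

lemma leader_velocity_deriv:
  assumes "0 < t" shows "(v 1 has_vector_derivative 0) (at t)"
proof -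
  have "(\<Sum>j\<in>{1..N}-{1}. q 1 j t *\<^sub>R (v j t - v 1 t)) = 0"
    using q_level[of 1 _ t] h_leader assms by (intro sum.neutral) force
  moreover have "(v 1 has_vector_derivative (\<Sum>j\<in>{1..N}-{1}. q 1 j t *\<^sub>R (v j t - v 1 t))) (at t)"
    using N assms by (intro has_vector_derivative_at_pos[OF dv]) auto
  ultimately show ?thesis by simp
qed

text \<open>Projecting onto a direction \<open>e\<close> turns the velocities relative to the leader into
  a scalar system to which the hierarchical comparison applies.\<close>

lemma projected_velocity_bound:
  assumes T: "0 \<le> T" and confined: "\<And>s. 0 \<le> s \<Longrightarrow> s < T \<Longrightarrow> diam N x s \<le> r"
    and i: "i \<in> {1..N}" and t: "0 \<le> t" "t \<le> T"
  shows "inner e (v i t - v 1 t) \<le> (MAX k\<in>{1..N}. inner e (v k 0 - v 1 0)) * erlang_surv l H t"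
proof -
  define y where "y k s = inner e (v k s - v 1 s)" for k s
  define \<sigma> where "\<sigma> = (MAX k\<in>{1..N}. y k 0)"
  have \<sigma>_ge: "y k 0 \<le> \<sigma>" if "k \<in> {1..N}" for k
    unfolding \<sigma>_def using that by (intro Max_ge) auto
  have \<sigma>: "0 \<le> \<sigma>" using \<sigma>_ge[of 1] N unfolding y_def by simp
  have "y i t \<le> \<sigma> * erlang_surv l (h i) t"
  proof (rule hierarchical_comparison[where I="{1..N}" and q=q and h=h and y=y and T=T])
    show "continuous_on {0..T} (y k)" if "k \<in> {1..N}" for k
      unfolding y_def using that N by (intro continuous_intros continuous_on_v) auto
    show "(y k has_real_derivative (\<Sum>j\<in>{1..N}-{k}. q k j s * (y j s - y k s))) (at s)"
      if k: "k \<in> {1..N}" and s: "0 < s" "s < T" for k s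
    proof -
      have "((\<lambda>s. v k s - v 1 s) has_vector_derivative
          (\<Sum>j\<in>{1..N}-{k}. q k j s *\<^sub>R (v j s - v k s)) - 0) (at s)"
        using k s by (intro has_vector_derivative_diff has_vector_derivative_at_pos[OF dv]
            leader_velocity_deriv) auto
      then have "(y k has_vector_derivative inner e (\<Sum>j\<in>{1..N}-{k}. q k j s *\<^sub>R (v j s - v k s))) (at s)"
        unfolding y_def using bounded_linear.has_vector_derivative[OF bounded_linear_inner_right] by fastforce
      then show ?thesis
        by (simp add: has_real_derivative_iff_has_vector_derivative y_def inner_sum_right inner_diff_right)
    qed
    show "0 \<le> q k j s" if "k \<in> {1..N}" "j \<in> {1..N}-{k}" "0 < s" "s < T" for k j s
      using q_nonneg[of k j s] that by auto
    show "h j < h k" if "k \<in> {1..N}" "j \<in> {1..N}-{k}" "0 < s" "s < T" "q k j s \<noteq> 0" for k j s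
      using q_level[of k j s] that by auto
    show "l \<le> (\<Sum>j\<in>{1..N}-{k}. q k j s)" if "k \<in> {1..N}" "0 < h k" "0 < s" "s < T" for k s
      using rate[of k s] confined[of s] that h_leader by (cases "k = 1") auto
    show "y k s \<le> 0" if "k \<in> {1..N}" "h k = 0" for k s
      using h_pos[of k] that unfolding y_def by (cases "k = 1") auto
  qed (use T l \<sigma> \<sigma>_ge i t in auto)
  also have "\<dots> \<le> \<sigma> * erlang_surv l H t"
    using \<sigma> l t h_le[OF i] by (intro mult_left_mono erlang_surv_mono) auto
  finally show ?thesis unfolding y_def \<sigma>_def .
qed

lemma velocity_gap_bound:
  assumes T: "0 \<le> T" and confined: "\<And>s. 0 \<le> s \<Longrightarrow> s < T \<Longrightarrow> diam N x s \<le> r"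
    and i: "i \<in> {1..N}" and j: "j \<in> {1..N}" and t: "0 \<le> t" "t \<le> T"
  shows "norm (v i t - v j t) \<le> V0 * erlang_surv l H t"
proof -
  define e where "e = v i t - v j t"
  define \<sigma> where "\<sigma> e = (MAX k\<in>{1..N}. inner e (v k 0 - v 1 0))" for e
  have "\<sigma> e' \<in> (\<lambda>k. inner e' (v k 0 - v 1 0)) ` {1..N}" for e'
    unfolding \<sigma>_def using N by (intro Max_in) auto
  then obtain a b where a: "a \<in> {1..N}" "\<sigma> e = inner e (v a 0 - v 1 0)"
    and b: "b \<in> {1..N}" "\<sigma> (-e) = inner (-e) (v b 0 - v 1 0)"
    by (meson imageE)
  have "\<sigma> e + \<sigma> (-e) = inner e (v a 0 - v b 0)"
    unfolding a b by (simp add: inner_diff_right)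
  also have "\<dots> \<le> norm e * norm (v a 0 - v b 0)" by (rule norm_cauchy_schwarz)
  also have "\<dots> \<le> norm e * V0" using norm_le_diam[OF a(1) b(1)] by (intro mult_left_mono) auto
  finally have \<sigma>_sum: "\<sigma> e + \<sigma> (-e) \<le> norm e * V0" .
  have g: "0 \<le> erlang_surv l H t" using erlang_surv_nonneg l t by simp
  have "norm e * norm e = inner e (v i t - v j t)"
    unfolding e_def by (simp flip: power2_eq_square power2_norm_eq_inner)
  also have "\<dots> = inner e (v i t - v 1 t) + inner (-e) (v j t - v 1 t)"
    by (simp add: inner_diff_right)
  also have "\<dots> \<le> \<sigma> e * erlang_surv l H t + \<sigma> (-e) * erlang_surv l H t"
    unfolding \<sigma>_def by (intro add_mono projected_velocity_bound[OF T confined] i j t)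
  also have "\<dots> \<le> norm e * (V0 * erlang_surv l H t)"
    using mult_right_mono[OF \<sigma>_sum g] by (simp add: algebra_simps)
  finally have "norm e * norm e \<le> norm e * (V0 * erlang_surv l H t)" .
  then show ?thesis
    unfolding e_def[symmetric] using diam_nonneg[OF N, of v 0] g
    by (cases "norm e = 0") (simp_all add: mult_le_cancel_left_pos)
qed

lemma position_gap_bound:
  assumes T: "0 \<le> T" and confined: "\<And>s. 0 \<le> s \<Longrightarrow> s < T \<Longrightarrow> diam N x s \<le> r"
    and i: "i \<in> {1..N}" and j: "j \<in> {1..N}"
  shows "norm (x i T - x j T) \<le> X0 + V0 * H / l"
proof -
  define d where "d s = x i s - x j s" for s
  define e where "e = d T - d 0"
  define D where "D s = inner e (d s - d 0) - norm e * V0 * erlang_surv_integral l H s" for s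
  define D' where "D' s = inner e (v i s - v j s) - norm e * V0 * erlang_surv l H s" for s
  have "D T \<le> 0"
  proof (rule nonpos_barrier[of T D D'])
    show "continuous_on {0..T} D" unfolding D_def d_def
      using i j by (intro continuous_intros continuous_on_x continuous_on_erlang_surv_integral) auto
    show "D 0 \<le> 0" unfolding D_def by (simp add: erlang_surv_integral_at_0)
    show "(D has_real_derivative D' s) (at s)" if s: "0 < s" "s < T" for s
    proof -
      have "((\<lambda>s. d s - d 0) has_vector_derivative v i s - v j s - 0) (at s)"
        unfolding d_def using s i j
        by (intro has_vector_derivative_diff has_vector_derivative_at_pos[OF dx] has_vector_derivative_const) auto
      then have "((\<lambda>s. inner e (d s - d 0)) has_real_derivative inner e (v i s - v j s)) (at s)"
        using bounded_linear.has_vector_derivative[OF bounded_linear_inner_right]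
        by (fastforce simp: has_real_derivative_iff_has_vector_derivative)
      then show ?thesis unfolding D_def D'_def
        using l by (intro DERIV_diff DERIV_cmult erlang_surv_integral_deriv) auto
    qed
    show "D' s \<le> 0" if s: "0 < s" "s < T" for s
    proof -
      have "inner e (v i s - v j s) \<le> norm e * norm (v i s - v j s)" by (rule norm_cauchy_schwarz)
      also have "\<dots> \<le> norm e * (V0 * erlang_surv l H s)"
        using velocity_gap_bound[OF T confined i j, of s] s by (intro mult_left_mono) auto
      finally show ?thesis unfolding D'_def by (simp add: algebra_simps)
    qed
  qed (rule T)
  then have "norm e * norm e \<le> norm e * (V0 * erlang_surv_integral l H T)"
    unfolding D_def e_def by (simp add: algebra_simps flip: power2_eq_square power2_norm_eq_inner)
  then have "norm e \<le> V0 * H / l"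
  proof (cases "norm e = 0")
    case False
    assume "norm e * norm e \<le> norm e * (V0 * erlang_surv_integral l H T)"
    then have "norm e \<le> V0 * erlang_surv_integral l H T" using False by simp
    also have "\<dots> \<le> V0 * H / l"
      using mult_left_mono[OF erlang_surv_integral_le[OF l T] diam_nonneg[OF N]] by simp
    finally show ?thesis .
  qed (use diam_nonneg[OF N, of v 0] l in simp)
  moreover have "norm (d T) \<le> norm (d 0) + norm e"
    unfolding e_def by (rule norm_triangle_sub)
  moreover have "norm (d 0) \<le> X0" unfolding d_def by (rule norm_le_diam[OF i j])
  ultimately show ?thesis unfolding d_def by simp
qed

text \<open>First exit: at the first time the diameter reaches \<open>r\<close> the position bound, which holds up
  to that time, already forces it to be strictly smaller than \<open>r\<close>.\<close>

lemma diam_le_radius: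
  assumes t: "0 \<le> t" shows "diam N x t \<le> r"
proof (rule ccontr)
  assume exit: "\<not> diam N x t \<le> r"
  define Z where "Z = (\<Union>(i, j)\<in>{1..N}\<times>{1..N}. {0..t} \<inter> (\<lambda>s. norm (x i s - x j s)) -` {r..})"
  have in_Z: "s \<in> Z" if "i \<in> {1..N}" "j \<in> {1..N}" "0 \<le> s" "s \<le> t" "r \<le> norm (x i s - x j s)" for i j s
    unfolding Z_def using that by (intro UN_I[of "(i, j)"]) auto
  have "closed ({0..t} \<inter> (\<lambda>s. norm (x i s - x j s)) -` {r..})" if "i \<in> {1..N}" "j \<in> {1..N}" for i j
    using that by (intro continuous_closed_preimage continuous_intros continuous_on_x) auto
  then have "closed Z" unfolding Z_def by (intro closed_UN) auto
  moreover have "bdd_below Z" unfolding Z_def by (intro bdd_belowI[where m=0]) auto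
  moreover have "t \<in> Z"
    using diam_attained[OF N, of x t] exit t by (auto intro: in_Z)
  ultimately have "Inf Z \<in> Z" using closed_contains_Inf by blast
  then obtain i j where ij: "i \<in> {1..N}" "j \<in> {1..N}" "r \<le> norm (x i (Inf Z) - x j (Inf Z))"
    and T: "0 \<le> Inf Z" unfolding Z_def by auto
  have "diam N x s \<le> r" if s: "0 \<le> s" "s < Inf Z" for s
  proof (rule diam_le[OF N], rule ccontr)
    fix i j assume "i \<in> {1..N}" "j \<in> {1..N}" "\<not> norm (x i s - x j s) \<le> r"
    moreover have "Inf Z \<le> t" using \<open>Inf Z \<in> Z\<close> unfolding Z_def by auto
    ultimately show False using s in_Z[of i j s] cInf_lower[OF _ \<open>bdd_below Z\<close>, of s] by auto
  qed
  then have "norm (x i (Inf Z) - x j (Inf Z)) \<le> X0 + V0 * H / l"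
    using position_gap_bound[OF T _ ij(1,2)] by blast
  moreover have "X0 + V0 * H / l < r" using small_data l by (simp add: field_simps)
  ultimately show False using ij by simp
qed

theorem flocking_holds: "flocking N x v"
  unfolding flocking_def
proof
  show "\<exists>B. \<forall>t\<ge>0. diam N x t \<le> B" using diam_le_radius by blast
  have bound: "diam N v t \<le> V0 * erlang_surv l H t" if t: "0 \<le> t" for t
  proof (rule diam_le[OF N])
    fix i j assume "i \<in> {1..N}" "j \<in> {1..N}"
    then show "norm (v i t - v j t) \<le> V0 * erlang_surv l H t"
      using t by (intro velocity_gap_bound[where T=t] diam_le_radius) auto
  qed
  have upper: "\<forall>\<^sub>F t in at_top. diam N v t \<le> V0 * erlang_surv l H t"
    using eventually_ge_at_top[of 0] by eventually_elim (rule bound)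
  have lower: "\<forall>\<^sub>F t in at_top. 0 \<le> diam N v t"
    using diam_nonneg[OF N] by (intro always_eventually) blast
  show "((\<lambda>t. diam N v t) \<longlongrightarrow> 0) at_top"
    using tendsto_sandwich[OF lower upper tendsto_const tendsto_mult_right_zero[OF erlang_surv_tendsto_0[OF l]]] .
qed

end

section \<open>Communication rates and radii\<close>

lemma psi_eq: "psi \<beta> r = 1 / (1 + r\<^sup>2) powr (\<beta> / 2)"
  unfolding psi_def by (simp add: powr_minus_divide)

lemma one_le_powr_radius: "0 \<le> \<beta> \<Longrightarrow> 1 \<le> (1 + (r::real)\<^sup>2) powr (\<beta> / 2)"
  by (simp add: ge_one_powr_ge_zero)

lemma psi_antimono: "0 \<le> \<beta> \<Longrightarrow> 0 \<le> u \<Longrightarrow> u \<le> w \<Longrightarrow> psi \<beta> w \<le> psi \<beta> u"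
  unfolding psi_def by (intro powr_mono2') (auto intro: power_mono add_pos_nonneg)

lemma psi_nonneg: "0 \<le> psi \<beta> r"
  unfolding psi_def by simp

lemma divide_le_divide_cross:
  fixes a b c d :: real
  shows "0 < b \<Longrightarrow> 0 < d \<Longrightarrow> a * d \<le> c * b \<Longrightarrow> a / b \<le> c / d"
  by (simp add: field_simps)

text \<open>Lower bound for the total Motsch-Tadmor weight \<open>s / (a\<^sub>i + s)\<close> of follower \<open>i\<close>, with
  \<open>Ai\<close> its row sum of \<open>A\<close>, \<open>P = (1 + r\<^sup>2)\<^bsup>\<beta>/2\<^esup>\<close> and \<open>s \<ge> Ai / P\<close> inside radius \<open>r\<close>.\<close>

lemma normalized_rate_lower_bound:
  fixes B ab As ai Ai P s :: real
  assumes B: "0 \<le> B" "B \<le> Ai / (ai + Ai)" and As: "0 < As" "As \<le> Ai"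
    and ai: "0 \<le> ai" "ai \<le> ab" and P: "1 \<le> P" and s: "Ai / P \<le> s"
  shows "B * (ab + As) / (As + ab * P) \<le> s / (ai + s)"
proof -
  have pos: "0 < Ai" "0 < P" "0 < As + ab * P" "0 < ai + Ai" "0 < ai * P + Ai" "0 < Ai / P"
    using As ai P by (auto intro: add_pos_nonneg add_nonneg_pos)
  have "B * (ab + As) / (As + ab * P) \<le> Ai / (ai + Ai) * (ab + As) / (As + ab * P)"
    using B As ai pos by (intro divide_right_mono mult_right_mono) auto
  also have "\<dots> = Ai * (ab + As) / ((ai + Ai) * (As + ab * P))" by simp
  also have "\<dots> \<le> Ai / (ai * P + Ai)"
  proof (rule divide_le_divide_cross)
    have "ai * As \<le> ab * Ai" using As ai by (intro mult_mono) auto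
    then have "0 \<le> Ai * (P - 1) * (Ai * ab - ai * As)"
      using pos P by (intro mult_nonneg_nonneg) (auto simp: mult.commute)
    moreover have "Ai * ((ai + Ai) * (As + ab * P)) - Ai * (ab + As) * (ai * P + Ai)
        = Ai * (P - 1) * (Ai * ab - ai * As)"
      by (simp add: algebra_simps)
    ultimately show "Ai * (ab + As) * (ai * P + Ai) \<le> Ai * ((ai + Ai) * (As + ab * P))" by linarith
  qed (use pos in auto)
  also have "\<dots> = (Ai / P) / (ai + Ai / P)" using pos by (simp add: field_simps)
  also have "\<dots> \<le> s / (ai + s)"
  proof (rule divide_le_divide_cross)
    show "Ai / P * (ai + s) \<le> s * (ai + Ai / P)"
      using mult_right_mono[OF s ai(1)] by (simp add: algebra_simps add_divide_distrib)
  qed (use pos(6) s ai(1) in linarith)+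
  finally show ?thesis .
qed

lemma ex_gt_if_filterlim_at_top:
  fixes f :: "real \<Rightarrow> real"
  assumes "filterlim f at_top at_top" shows "\<exists>r. c < f r"
proof -
  have "\<forall>\<^sub>F r in at_top. c < f r" using assms unfolding filterlim_at_top_dense by blast
  then show ?thesis by (rule eventually_happens'[rotated]) simp
qed

lemma ex_gt_if_tendsto:
  fixes f :: "real \<Rightarrow> real"
  assumes "(f \<longlongrightarrow> L) at_top" and "c < L" shows "\<exists>r. c < f r"
proof -
  have "\<forall>\<^sub>F r in at_top. c < f r" using order_tendstoD(1)[OF assms] .
  then show ?thesis by (rule eventually_happens'[rotated]) simp
qed

lemma gain_unbounded_beta_lt_1:
  "0 < c \<Longrightarrow> 0 \<le> \<beta> \<Longrightarrow> \<beta> < 1 \<Longrightarrow>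
    filterlim (\<lambda>r::real. c * (r - X0) / (1 + r\<^sup>2) powr (\<beta> / 2)) at_top at_top"
  by real_asymp

lemma gain_unbounded_linear: "0 < c \<Longrightarrow> filterlim (\<lambda>r::real. c * (r - X0)) at_top at_top"
  by real_asymp

lemma gain_tendsto_beta_1: "((\<lambda>r::real. c * (r - X0) / (1 + r\<^sup>2) powr (1 / 2)) \<longlongrightarrow> c) at_top"
  by real_asymp

lemma MT_gain_tendsto_beta_1:
  "0 < ab \<Longrightarrow> 0 < As \<Longrightarrow>
    ((\<lambda>r::real. c * (ab + As) * (r - X0) / (As + ab * (1 + r\<^sup>2) powr (1 / 2))) \<longlongrightarrow> c * (ab + As) / ab) at_top"
  by real_asymp (simp add: divide_inverse)

section \<open>Leader hierarchies\<close>

lemma path_to_1_Cons: "edge N A i j \<Longrightarrow> path_to_1 N A j k \<Longrightarrow> path_to_1 N A i (Suc k)"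
  unfolding path_to_1_def
proof (elim exE conjE)
  fix p assume "edge N A i j" "p 0 = j" "p k = 1" "\<forall>m<k. edge N A (p m) (p (Suc m))"
  then show "\<exists>p'. p' 0 = i \<and> p' (Suc k) = 1 \<and> (\<forall>m<Suc k. edge N A (p' m) (p' (Suc m)))"
    by (intro exI[of _ "\<lambda>m. if m = 0 then i else p (m - 1)"]) (auto simp: less_Suc_eq_0_disj)
qed

locale leader_hierarchy =
  fixes N :: nat and A :: "nat \<Rightarrow> nat \<Rightarrow> real"
  assumes N2: "N \<ge> 2"
    and A_nonneg: "\<forall>i\<in>{1..N}. \<forall>j\<in>{1..N}. A i j \<ge> 0"
    and A_lower: "\<forall>i\<in>{1..N}. \<forall>j\<in>{1..N}. A i j > 0 \<longrightarrow> j < i"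
    and A_leader: "\<forall>i\<in>{2..N}. \<exists>j\<in>{1..<i}. A i j > 0"
begin

lemma path_to_1_length_less:
  assumes "path_to_1 N A i k" shows "k < i"
proof -
  obtain p where p: "p 0 = i" "p k = 1" "\<forall>m<k. edge N A (p m) (p (Suc m))"
    using assms unfolding path_to_1_def by blast
  have "p m + m \<le> i" if "m \<le> k" for m
    using that
  proof (induction m)
    case (Suc m)
    then have "p (Suc m) < p m" using p(3) A_lower unfolding edge_def by auto
    then show ?case using Suc by simp
  qed (simp add: p(1))
  then show ?thesis using p(2) by fastforce
qed

lemma path_to_1_exists: "i \<in> {1..N} \<Longrightarrow> \<exists>k. path_to_1 N A i k"
proof (induction i rule: less_induct)
  case (less i)
  show ?case
  proof (cases "i = 1")
    case True
    then show ?thesis unfolding path_to_1_def by (intro exI[of _ 0] exI[of _ "\<lambda>_. 1"]) auto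
  next
    case False
    then have "i \<in> {2..N}" using less.prems by auto
    then obtain j where j: "j \<in> {1..<i}" "A i j > 0" using A_leader by blast
    then obtain k where "path_to_1 N A j k" using less.IH[of j] less.prems by auto
    moreover have "edge N A i j" using j less.prems unfolding edge_def by auto
    ultimately show ?thesis using path_to_1_Cons by blast
  qed
qed

lemma finite_path_lengths: "finite {k. path_to_1 N A i k}"
  by (rule finite_subset[of _ "{..<i}"]) (auto dest: path_to_1_length_less)

lemma path_to_1_hh: "i \<in> {1..N} \<Longrightarrow> path_to_1 N A i (hh N A i)"
  unfolding hh_def using Max_in[OF finite_path_lengths] path_to_1_exists by auto

lemma hh_less_if_edge:
  assumes "i \<in> {1..N}" "j \<in> {1..N}-{i}" "A i j > 0" shows "hh N A j < hh N A i"
proof -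
  have "path_to_1 N A i (Suc (hh N A j))"
    using assms by (intro path_to_1_Cons[OF _ path_to_1_hh]) (auto simp: edge_def)
  then show ?thesis unfolding hh_def using Max_ge[OF finite_path_lengths] by fastforce
qed

lemma hh_1: "hh N A 1 = 0"
  using path_to_1_length_less[OF path_to_1_hh, of 1] N2 by simp

lemma hh_pos: assumes i: "i \<in> {2..N}" shows "0 < hh N A i"
proof -
  obtain j where "j \<in> {1..<i}" "A i j > 0" using A_leader i by blast
  then have "hh N A j < hh N A i" using i by (intro hh_less_if_edge) auto
  then show ?thesis by simp
qed

lemma hh_le_HH: "i \<in> {1..N} \<Longrightarrow> hh N A i \<le> HH N A"
  unfolding HH_def using hh_1 by (cases "i = 1") (auto intro: Max_ge)

lemma HH_pos: "0 < HH N A"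
  using hh_pos[of 2] hh_le_HH[of 2] N2 by force

definition out_weight :: "nat \<Rightarrow> real" where
  "out_weight i = (\<Sum>j\<in>{1..N}-{i}. A i j)"

lemma out_weight_pos: assumes i: "i \<in> {2..N}" shows "0 < out_weight i"
proof -
  obtain j where "j \<in> {1..<i}" "A i j > 0" using A_leader i by blast
  then show ?thesis unfolding out_weight_def using i A_nonneg by (intro sum_pos2[of _ j]) auto
qed

lemma Astar_le: "i \<in> {2..N} \<Longrightarrow> Astar N A \<le> out_weight i"
  unfolding Astar_def out_weight_def by (intro Min_le) auto

lemma Astar_pos: "0 < Astar N A"
proof -
  have "Astar N A \<in> out_weight ` {2..N}"
    unfolding Astar_def out_weight_def[abs_def] using N2 by (intro Min_in) auto
  then show ?thesis using out_weight_pos by auto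
qed

lemma Bmat_row_sum: "(\<Sum>j\<in>{1..N}-{i}. Bmat N A a i j) = out_weight i / (a i + out_weight i)"
  unfolding Bmat_def out_weight_def by (simp add: sum_divide_distrib)

lemma Bstar_le: "i \<in> {2..N} \<Longrightarrow> Bstar N A a \<le> out_weight i / (a i + out_weight i)"
  unfolding Bstar_def Bmat_row_sum[symmetric] by (intro Min_le) auto

lemma Bstar_pos: assumes a: "\<forall>i\<in>{1..N}. a i \<ge> 0" shows "0 < Bstar N A a"
proof -
  have "Bstar N A a \<in> (\<lambda>i. out_weight i / (a i + out_weight i)) ` {2..N}"
    unfolding Bstar_def Bmat_row_sum using N2 by (intro Min_in) auto
  then obtain i where i: "i \<in> {2..N}" and "Bstar N A a = out_weight i / (a i + out_weight i)" by blast
  moreover have "0 \<le> a i" using a i by simp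
  ultimately show ?thesis using out_weight_pos[OF i] by simp
qed

lemma abar_ge: "i \<in> {2..N} \<Longrightarrow> a i \<le> abar N a"
  unfolding abar_def by (intro Max_ge) auto

lemma abar_nonneg: assumes a: "\<forall>i\<in>{1..N}. a i \<ge> 0" shows "0 \<le> abar N a"
proof -
  have "0 \<le> a 2" using a N2 by simp
  also have "\<dots> \<le> abar N a" using N2 by (intro abar_ge) simp
  finally show ?thesis .
qed

lemma flocking_if_weights_follow_A:
  fixes x v :: "nat \<Rightarrow> real \<Rightarrow> 'a::euclidean_space" and q :: "nat \<Rightarrow> nat \<Rightarrow> real \<Rightarrow> real"
  assumes l: "0 < l"
    and dx: "\<And>i t. i \<in> {1..N} \<Longrightarrow> 0 \<le> t \<Longrightarrow> (x i has_vector_derivative v i t) (at t within {0..})"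
    and dv: "\<And>i t. i \<in> {1..N} \<Longrightarrow> 0 \<le> t \<Longrightarrow>
       (v i has_vector_derivative (\<Sum>j\<in>{1..N}-{i}. q i j t *\<^sub>R (v j t - v i t))) (at t within {0..})"
    and q_nonneg: "\<And>i j t. i \<in> {1..N} \<Longrightarrow> j \<in> {1..N}-{i} \<Longrightarrow> 0 \<le> t \<Longrightarrow> 0 \<le> q i j t"
    and q_support: "\<And>i j t. i \<in> {1..N} \<Longrightarrow> j \<in> {1..N}-{i} \<Longrightarrow> 0 \<le> t \<Longrightarrow> q i j t \<noteq> 0 \<Longrightarrow> A i j \<noteq> 0"
    and rate: "\<And>i t. i \<in> {2..N} \<Longrightarrow> 0 \<le> t \<Longrightarrow> diam N x t \<le> r \<Longrightarrow> l \<le> (\<Sum>j\<in>{1..N}-{i}. q i j t)"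
    and small_data: "diam N v 0 * HH N A < l * (r - diam N x 0)"
  shows "flocking N x v"
proof -
  interpret hierarchical_flock N x v q "hh N A" "HH N A" l r
  proof
    show "hh N A j < hh N A i" if "i \<in> {1..N}" "j \<in> {1..N}-{i}" "0 \<le> t" "q i j t \<noteq> 0" for i j t
      using q_support[OF that] A_nonneg that by (intro hh_less_if_edge) force+
  qed (use N2 l dx dv q_nonneg hh_1 hh_pos hh_le_HH rate small_data in auto)
  show ?thesis by (rule flocking_holds)
qed

section \<open>Cucker-Smale and Motsch-Tadmor weights\<close>

lemma out_weight_psi_le:
  assumes i: "i \<in> {1..N}" and \<beta>: "0 \<le> \<beta>" and confined: "diam N x t \<le> r"
  shows "out_weight i / (1 + r\<^sup>2) powr (\<beta> / 2) \<le> (\<Sum>j\<in>{1..N}-{i}. A i j * psi \<beta> (norm (x i t - x j t)))"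
proof -
  have "out_weight i / (1 + r\<^sup>2) powr (\<beta> / 2) = (\<Sum>j\<in>{1..N}-{i}. A i j * psi \<beta> r)"
    unfolding out_weight_def psi_eq by (simp add: sum_divide_distrib)
  also have "\<dots> \<le> (\<Sum>j\<in>{1..N}-{i}. A i j * psi \<beta> (norm (x i t - x j t)))"
  proof (rule sum_mono)
    fix j assume j: "j \<in> {1..N}-{i}"
    then have "norm (x i t - x j t) \<le> r" using norm_le_diam[OF i, of j x t] confined by auto
    then show "A i j * psi \<beta> r \<le> A i j * psi \<beta> (norm (x i t - x j t))"
      using A_nonneg i j \<beta> by (intro mult_left_mono psi_antimono) auto
  qed
  finally show ?thesis .
qed

lemma CS_flocking:
  fixes x v :: "nat \<Rightarrow> real \<Rightarrow> 'a::euclidean_space"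
  assumes \<alpha>: "0 < \<alpha>" and \<beta>: "0 \<le> \<beta>" and sol: "CS_solution N \<alpha> A \<beta> x v"
    and small_data: "diam N v 0 < C_HL N \<alpha> A * (r - diam N x 0) / (1 + r\<^sup>2) powr (\<beta> / 2)"
  shows "flocking N x v"
proof (rule flocking_if_weights_follow_A)
  let ?P = "(1 + r\<^sup>2) powr (\<beta> / 2)"
  have P: "1 \<le> ?P" using one_le_powr_radius[OF \<beta>] .
  show "0 < \<alpha> * Astar N A / ?P" using \<alpha> Astar_pos P by (intro divide_pos_pos mult_pos_pos) auto
  show "(x i has_vector_derivative v i t) (at t within {0..})"
    and "(v i has_vector_derivative (\<Sum>j\<in>{1..N}-{i}. (\<alpha> * (A i j * psi \<beta> (norm (x j t - x i t)))) *\<^sub>R (v j t - v i t)))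
          (at t within {0..})" if "i \<in> {1..N}" "0 \<le> t" for i t
    using sol that unfolding CS_solution_def by (auto simp: scaleR_sum_right)
  show "0 \<le> \<alpha> * (A i j * psi \<beta> (norm (x j t - x i t)))" if "i \<in> {1..N}" "j \<in> {1..N}-{i}" for i j t
    using that \<alpha> A_nonneg psi_nonneg by simp
  show "A i j \<noteq> 0" if "\<alpha> * (A i j * psi \<beta> (norm (x j t - x i t))) \<noteq> 0" for i j t
    using that by auto
  show "\<alpha> * Astar N A / ?P \<le> (\<Sum>j\<in>{1..N}-{i}. \<alpha> * (A i j * psi \<beta> (norm (x j t - x i t))))"
    if i: "i \<in> {2..N}" and "diam N x t \<le> r" for i t
  proof -
    have "Astar N A / ?P \<le> out_weight i / ?P"
      using Astar_le[OF i] P by (simp add: divide_right_mono)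
    also have "\<dots> \<le> (\<Sum>j\<in>{1..N}-{i}. A i j * psi \<beta> (norm (x j t - x i t)))"
      using out_weight_psi_le[of i \<beta> x t r] i \<beta> that by (simp add: norm_minus_commute)
    finally have "\<alpha> * (Astar N A / ?P) \<le> \<alpha> * (\<Sum>j\<in>{1..N}-{i}. A i j * psi \<beta> (norm (x j t - x i t)))"
      using \<alpha> by (intro mult_left_mono) auto
    then show ?thesis by (simp add: sum_distrib_left)
  qed
  have "C_HL N \<alpha> A * (r - diam N x 0) / ?P = \<alpha> * Astar N A / ?P * (r - diam N x 0) / HH N A"
    unfolding C_HL_def by simp
  with small_data show "diam N v 0 * HH N A < \<alpha> * Astar N A / ?P * (r - diam N x 0)"
    using HH_pos by (metis of_nat_0_less_iff pos_less_divide_eq)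
qed

lemma MT_flocking:
  fixes x v :: "nat \<Rightarrow> real \<Rightarrow> 'a::euclidean_space"
  assumes \<alpha>: "0 < \<alpha>" and \<beta>: "0 \<le> \<beta>" and a: "\<forall>i\<in>{1..N}. a i \<ge> 0"
    and sol: "MT_solution N \<alpha> A a \<beta> x v"
    and small_data: "diam N v 0 < M_HL N \<alpha> A a * (abar N a + Astar N A) * (r - diam N x 0)
                        / (Astar N A + abar N a * (1 + r\<^sup>2) powr (\<beta> / 2))"
  shows "flocking N x v"
proof -
  let ?P = "(1 + r\<^sup>2) powr (\<beta> / 2)"
  define s where "s i t = (\<Sum>k\<in>{1..N}-{i}. A i k * psi \<beta> (norm (x i t - x k t)))" for i t
  have P: "1 \<le> ?P" using one_le_powr_radius[OF \<beta>] .
  have denom: "0 < Astar N A + abar N a * ?P"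
    using Astar_pos abar_nonneg[OF a] P by (simp add: add_pos_nonneg)
  have s_nonneg: "0 \<le> s i t" if "i \<in> {1..N}" for i t
    unfolding s_def using that A_nonneg psi_nonneg by (intro sum_nonneg) auto
  show ?thesis
  proof (rule flocking_if_weights_follow_A)
    show "0 < \<alpha> * (Bstar N A a * (abar N a + Astar N A) / (Astar N A + abar N a * ?P))"
      using \<alpha> Bstar_pos[OF a] Astar_pos abar_nonneg[OF a] denom by simp
    show "(x i has_vector_derivative v i t) (at t within {0..})"
      and "(v i has_vector_derivative (\<Sum>j\<in>{1..N}-{i}.
            (\<alpha> * (A i j * psi \<beta> (norm (x i t - x j t)) / (a i + s i t))) *\<^sub>R (v j t - v i t))) (at t within {0..})"
      if "i \<in> {1..N}" "0 \<le> t" for i t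
      using sol that unfolding MT_solution_def s_def by (auto simp: scaleR_sum_right)
    show "0 \<le> \<alpha> * (A i j * psi \<beta> (norm (x i t - x j t)) / (a i + s i t))"
      if "i \<in> {1..N}" "j \<in> {1..N}-{i}" for i j t
      using that \<alpha> A_nonneg psi_nonneg a s_nonneg by simp
    show "A i j \<noteq> 0" if "\<alpha> * (A i j * psi \<beta> (norm (x i t - x j t)) / (a i + s i t)) \<noteq> 0" for i j t
      using that by auto
    show "\<alpha> * (Bstar N A a * (abar N a + Astar N A) / (Astar N A + abar N a * ?P))
        \<le> (\<Sum>j\<in>{1..N}-{i}. \<alpha> * (A i j * psi \<beta> (norm (x i t - x j t)) / (a i + s i t)))"
      if i: "i \<in> {2..N}" and "diam N x t \<le> r" for i t
    proof -
      have "Bstar N A a * (abar N a + Astar N A) / (Astar N A + abar N a * ?P) \<le> s i t / (a i + s i t)"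
        unfolding s_def using i a \<beta> that
        by (intro normalized_rate_lower_bound[OF less_imp_le[OF Bstar_pos[OF a]] Bstar_le[OF i, of a]
              Astar_pos Astar_le[OF i] _ abar_ge[OF i, of a] P] out_weight_psi_le) auto
      moreover have "s i t / (a i + s i t) = (\<Sum>j\<in>{1..N}-{i}. A i j * psi \<beta> (norm (x i t - x j t)) / (a i + s i t))"
        unfolding s_def by (simp add: sum_divide_distrib)
      ultimately have "\<alpha> * (Bstar N A a * (abar N a + Astar N A) / (Astar N A + abar N a * ?P))
          \<le> \<alpha> * (\<Sum>j\<in>{1..N}-{i}. A i j * psi \<beta> (norm (x i t - x j t)) / (a i + s i t))"
        using \<alpha> by (intro mult_left_mono) auto
      then show ?thesis by (simp add: sum_distrib_left)
    qed
    have "M_HL N \<alpha> A a * (abar N a + Astar N A) * (r - diam N x 0) / (Astar N A + abar N a * ?P)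
        = \<alpha> * (Bstar N A a * (abar N a + Astar N A) / (Astar N A + abar N a * ?P)) * (r - diam N x 0) / HH N A"
      unfolding M_HL_def by (simp add: ac_simps)
    with small_data show "diam N v 0 * HH N A
        < \<alpha> * (Bstar N A a * (abar N a + Astar N A) / (Astar N A + abar N a * ?P)) * (r - diam N x 0)"
      using HH_pos by (metis of_nat_0_less_iff pos_less_divide_eq)
  qed
qed

lemma C_HL_pos: "0 < \<alpha> \<Longrightarrow> 0 < C_HL N \<alpha> A"
  unfolding C_HL_def using Astar_pos HH_pos by simp

lemma M_HL_pos: "0 < \<alpha> \<Longrightarrow> \<forall>i\<in>{1..N}. a i \<ge> 0 \<Longrightarrow> 0 < M_HL N \<alpha> A a"
  unfolding M_HL_def using Bstar_pos HH_pos by simp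

lemma CS_flocking_beta_lt_1:
  fixes x v :: "nat \<Rightarrow> real \<Rightarrow> 'a::euclidean_space"
  assumes \<alpha>: "0 < \<alpha>" and \<beta>: "0 \<le> \<beta>" "\<beta> < 1" and sol: "CS_solution N \<alpha> A \<beta> x v"
  shows "flocking N x v"
proof -
  obtain r where "diam N v 0 < C_HL N \<alpha> A * (r - diam N x 0) / (1 + r\<^sup>2) powr (\<beta> / 2)"
    using ex_gt_if_filterlim_at_top[OF gain_unbounded_beta_lt_1[OF C_HL_pos[OF \<alpha>] \<beta>]] by blast
  then show ?thesis by (rule CS_flocking[OF \<alpha> \<beta>(1) sol])
qed

lemma CS_flocking_beta_1:
  fixes x v :: "nat \<Rightarrow> real \<Rightarrow> 'a::euclidean_space"
  assumes \<alpha>: "0 < \<alpha>" and sol: "CS_solution N \<alpha> A 1 x v" and small_data: "diam N v 0 < C_HL N \<alpha> A"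
  shows "flocking N x v"
proof -
  obtain r where "diam N v 0 < C_HL N \<alpha> A * (r - diam N x 0) / (1 + r\<^sup>2) powr (1 / 2)"
    using ex_gt_if_tendsto[OF gain_tendsto_beta_1 small_data] by blast
  then show ?thesis using CS_flocking[OF \<alpha> _ sol] by simp
qed

lemma MT_flocking_abar_0:
  fixes x v :: "nat \<Rightarrow> real \<Rightarrow> 'a::euclidean_space"
  assumes \<alpha>: "0 < \<alpha>" and \<beta>: "0 \<le> \<beta>" and a: "\<forall>i\<in>{1..N}. a i \<ge> 0"
    and sol: "MT_solution N \<alpha> A a \<beta> x v" and abar: "abar N a = 0"
  shows "flocking N x v"
proof -
  obtain r where "diam N v 0 < M_HL N \<alpha> A a * (r - diam N x 0)"
    using ex_gt_if_filterlim_at_top[OF gain_unbounded_linear[OF M_HL_pos[OF \<alpha> a]]] by blast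
  then show ?thesis using MT_flocking[OF \<alpha> \<beta> a sol] abar Astar_pos by simp
qed

lemma MT_flocking_beta_lt_1:
  fixes x v :: "nat \<Rightarrow> real \<Rightarrow> 'a::euclidean_space"
  assumes \<alpha>: "0 < \<alpha>" and \<beta>: "0 \<le> \<beta>" "\<beta> < 1" and a: "\<forall>i\<in>{1..N}. a i \<ge> 0"
    and sol: "MT_solution N \<alpha> A a \<beta> x v"
  shows "flocking N x v"
proof -
  let ?ab = "abar N a" and ?As = "Astar N A" and ?M = "M_HL N \<alpha> A a" and ?X0 = "diam N x 0"
  have "?M * (r - ?X0) / (1 + r\<^sup>2) powr (\<beta> / 2)
      \<le> ?M * (?ab + ?As) * (r - ?X0) / (?As + ?ab * (1 + r\<^sup>2) powr (\<beta> / 2))"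
    if "?X0 \<le> r" for r
  proof -
    let ?P = "(1 + r\<^sup>2) powr (\<beta> / 2)"
    have P: "1 \<le> ?P" using one_le_powr_radius[OF \<beta>(1)] .
    have "?As + ?ab * ?P \<le> (?ab + ?As) * ?P" using P Astar_pos by (simp add: algebra_simps)
    then have "?M * (r - ?X0) * (?As + ?ab * ?P) \<le> ?M * (r - ?X0) * ((?ab + ?As) * ?P)"
      using that M_HL_pos[OF \<alpha> a] by (intro mult_left_mono) auto
    then show ?thesis
      using P Astar_pos abar_nonneg[OF a]
      by (intro divide_le_divide_cross) (auto intro: add_pos_nonneg simp: ac_simps)
  qed
  then have "filterlim (\<lambda>r. ?M * (?ab + ?As) * (r - ?X0) / (?As + ?ab * (1 + r\<^sup>2) powr (\<beta> / 2))) at_top at_top"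
    by (intro filterlim_at_top_mono[OF gain_unbounded_beta_lt_1[OF M_HL_pos[OF \<alpha> a] \<beta>]]
        eventually_mono[OF eventually_ge_at_top[of ?X0]])
  then obtain r where "diam N v 0 < ?M * (?ab + ?As) * (r - ?X0) / (?As + ?ab * (1 + r\<^sup>2) powr (\<beta> / 2))"
    using ex_gt_if_filterlim_at_top by blast
  then show ?thesis by (rule MT_flocking[OF \<alpha> \<beta>(1) a sol])
qed

lemma MT_flocking_beta_1:
  fixes x v :: "nat \<Rightarrow> real \<Rightarrow> 'a::euclidean_space"
  assumes \<alpha>: "0 < \<alpha>" and a: "\<forall>i\<in>{1..N}. a i \<ge> 0" and sol: "MT_solution N \<alpha> A a 1 x v"
    and abar: "0 < abar N a"
    and small_data: "diam N v 0 < M_HL N \<alpha> A a * (abar N a + Astar N A) / abar N a"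
  shows "flocking N x v"
proof -
  obtain r where "diam N v 0 < M_HL N \<alpha> A a * (abar N a + Astar N A) * (r - diam N x 0)
      / (Astar N A + abar N a * (1 + r\<^sup>2) powr (1 / 2))"
    using ex_gt_if_tendsto[OF MT_gain_tendsto_beta_1[OF abar Astar_pos] small_data] by blast
  then show ?thesis using MT_flocking[OF \<alpha> _ a sol] by simp
qed

end

theorem corollary3p10:
  fixes N :: nat and \<alpha> \<beta> :: real and A :: "nat \<Rightarrow> nat \<Rightarrow> real"
  assumes N2: "N \<ge> 2" and alpha: "\<alpha> > 0" and beta: "\<beta> \<ge> 0"
    and A_nonneg: "\<forall>i\<in>{1..N}. \<forall>j\<in>{1..N}. A i j \<ge> 0"
    and A_lower: "\<forall>i\<in>{1..N}. \<forall>j\<in>{1..N}. A i j > 0 \<longrightarrow> j < i"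
    and A_leader: "\<forall>i\<in>{2..N}. \<exists>j\<in>{1..<i}. A i j > 0"
  shows
   "(\<forall>(x :: nat \<Rightarrow> real \<Rightarrow> 'a::euclidean_space) v. CS_solution N \<alpha> A \<beta> x v \<longrightarrow>
      ((\<beta> < 1 \<longrightarrow> flocking N x v) \<and>
       (\<beta> = 1 \<and> diam N v 0 < C_HL N \<alpha> A \<longrightarrow> flocking N x v) \<and>
       (\<beta> > 1 \<longrightarrow>
          (let X0 = diam N x 0;
               r = (sqrt ((\<beta> * X0)\<^sup>2 + 4 * (\<beta> - 1)) + \<beta> * X0) / (2 * (\<beta> - 1))
           in diam N v 0 < C_HL N \<alpha> A * (r - X0) / (1 + r\<^sup>2) powr (\<beta> / 2))
          \<longrightarrow> flocking N x v)))
  \<and>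
   (\<forall>(a :: nat \<Rightarrow> real). (\<forall>i\<in>{1..N}. a i \<ge> 0) \<longrightarrow>
      (\<forall>i\<in>{1..N}. (\<forall>j\<in>{1..N}-{i}. A i j = 0) \<longrightarrow> a i > 0) \<longrightarrow>
    (\<forall>(x :: nat \<Rightarrow> real \<Rightarrow> 'a::euclidean_space) v. MT_solution N \<alpha> A a \<beta> x v \<longrightarrow>
      ((abar N a = 0 \<or> \<beta> < 1 \<longrightarrow> flocking N x v) \<and>
       (abar N a > 0 \<and> \<beta> = 1 \<and>
          diam N v 0 < M_HL N \<alpha> A a * (abar N a + Astar N A) / abar N a
          \<longrightarrow> flocking N x v) \<and>
       (\<forall>r. abar N a > 0 \<and> \<beta> > 1 \<and> r \<ge> diam N x 0 \<and>
          (1 - \<beta>) * r\<^sup>2 + \<beta> * diam N x 0 * r + 1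
            = - (Astar N A / abar N a) * (1 + r\<^sup>2) powr (1 - \<beta> / 2) \<and>
          diam N v 0 < M_HL N \<alpha> A a * (abar N a + Astar N A) * (r - diam N x 0)
                        / (Astar N A + abar N a * (1 + r\<^sup>2) powr (\<beta> / 2))
          \<longrightarrow> flocking N x v))))"
proof -
  interpret leader_hierarchy N A using N2 A_nonneg A_lower A_leader by unfold_locales
  show ?thesis
    using CS_flocking_beta_lt_1[OF alpha beta] CS_flocking_beta_1[OF alpha] CS_flocking[OF alpha beta]
      MT_flocking_abar_0[OF alpha beta] MT_flocking_beta_lt_1[OF alpha beta]
      MT_flocking_beta_1[OF alpha] MT_flocking[OF alpha beta]
    by (auto simp: Let_def)
qed

end
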